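(* Let $\mathbf T:=\mathbf T_0^{\otimes m}$, $\mathbf P\in\mathrm{Aut}(\mathbf T)$ and $\mathbf T_{\mathbf P}:=\mathbf P\mathbf T$. Then $$\mathrm{Aut}(\mathbf T_{\mathbf P})=\{\mathbf Q\in\mathrm{Aut}(\mathbf T):\mathbf Q\mathbf P=\mathbf P\mathbf Q\}.$$ Moreover, writing $\mathbf P=\mathbf P_\sigma$ with $\sigma\in\mathcal S_m$, one has $\mathrm{Aut}(\mathbf T_{\mathbf P})=\{\mathbf P_\tau:\tau\in\mathcal S_m,\ \tau\sigma=\sigma\tau\}$.
   Context: $\mathbf T_0=\begin{pmatrix}1&0\\1&1\end{pmatrix}$; rows/columns of $\mathbf T_0^{\otimes m}$ indexed by $x\in\{0,1\}^m$ via the Kronecker rule. For any matrix $\mathbf M$, $\mathrm{Aut}(\mathbf M)$ is the set of permutation matrices $\mathbf Q$ with $\mathbf Q^\top\mathbf M\mathbf Q=\mathbf M$. For $\sigma\in\mathcal S_m$, $\mathbf P_\sigma$ is the permutation matrix with $\mathbf P_\sigma\mathbf e_{(x_1,\dots,x_m)}=\mathbf e_{(x_{\sigma(1)},\dots,x_{\sigma(m)})}$; every element of $\mathrm{Aut}(\mathbf T)$ is of this form for a unique $\sigma$. *)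

theory Defs
  imports "Jordan_Normal_Form.Matrix" "HOL-Combinatorics.Permutations"
begin

definition T0 :: "int mat" where
  "T0 = mat_of_rows_list 2 [[1, 0], [1, 1]]"

definition kron :: "int mat \<Rightarrow> int mat \<Rightarrow> int mat" where
  "kron A B = mat (dim_row A * dim_row B) (dim_col A * dim_col B)
     (\<lambda>(i, j). A $$ (i div dim_row B, j div dim_col B) * B $$ (i mod dim_row B, j mod dim_col B))"

definition Tm :: "nat \<Rightarrow> int mat" where
  "Tm m = ((kron T0) ^^ m) (1\<^sub>m 1)"

definition is_perm_mat :: "nat \<Rightarrow> int mat \<Rightarrow> bool" where
  "is_perm_mat n Q \<longleftrightarrow> (\<exists>\<pi>. \<pi> permutes {..<n} \<and>
      Q = mat n n (\<lambda>(i, j). if i = \<pi> j then 1 else 0))"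

definition Aut :: "int mat \<Rightarrow> int mat set" where
  "Aut M = {Q. is_perm_mat (dim_row M) Q \<and> transpose_mat Q * M * Q = M}"

(* Kronecker rule: x = (x_1,...,x_m) \<in> {0,1}^m has index \<Sum> x_i 2^(m-i) (x_1 most significant) *)
definition bits_index :: "nat \<Rightarrow> (nat \<Rightarrow> bool) \<Rightarrow> nat" where
  "bits_index m x = (\<Sum>i = 1..m. if x i then 2 ^ (m - i) else 0)"

definition index_bit :: "nat \<Rightarrow> nat \<Rightarrow> nat \<Rightarrow> bool" where
  "index_bit m k i = odd (k div 2 ^ (m - i))"

(* P_\<sigma> e_(x_1..x_m) = e_(x_\<sigma>(1)..x_\<sigma>(m)) *)
definition Psig :: "nat \<Rightarrow> (nat \<Rightarrow> nat) \<Rightarrow> int mat" where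
  "Psig m \<sigma> = mat (2 ^ m) (2 ^ m)
     (\<lambda>(i, j). if i = bits_index m (\<lambda>l. index_bit m j (\<sigma> l)) then 1 else 0)"

end

theory Submission
  imports Defs
begin

(* Index rows and columns by the supports x of the 0/1-tuples, i.e. by the subsets of {1..m}.
   Then T is the incidence matrix of inclusion (T_{x,y} = 1 iff y is a subset of x), and
   P_sigma relabels x as its preimage under sigma.

   For the incidence matrix M of any partial order R and any permutation matrix P_p, a
   permutation pi is an automorphism of P_p M iff R (phi k) (pi j) <-> R k j for all k, j,
   where phi = p^-1 pi p. Reflexivity gives R (phi k) (pi k); reflexivity, surjectivity and
   transitivity give R (pi k) (phi k); so antisymmetry forces phi = pi, i.e. pi commutes with
   p and preserves R.

   An order automorphism of the Boolean lattice of subsets of {1..m} maps singletons to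
   singletons and is therefore induced by a permutation of {1..m}; hence Aut(T) consists of
   the matrices P_tau. Finally tau |-> P_tau is an injective anti-homomorphism, so P_tau
   commutes with P_sigma iff tau commutes with sigma. *)

section \<open>Automorphisms of partial orders\<close>

lemma twisted_order_automorphism_eq:
  fixes R :: "'a \<Rightarrow> 'a \<Rightarrow> bool"
  assumes refl: "reflp_on S R" and trans: "transp_on S R" and antisym: "antisymp_on S R"
    and \<phi>: "\<phi> permutes S" and \<pi>: "\<pi> permutes S"
    and twisted: "\<And>k j. k \<in> S \<Longrightarrow> j \<in> S \<Longrightarrow> R (\<phi> k) (\<pi> j) \<longleftrightarrow> R k j"
    and a: "a \<in> S"
  shows "\<phi> a = \<pi> a"
proof -
  have "\<phi> a \<in> S" "\<pi> a \<in> S"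
    using a permutes_in_image[OF \<phi>] permutes_in_image[OF \<pi>] by simp_all
  obtain k where k: "k \<in> S" "\<phi> k = \<pi> a"
    using permutes_image[OF \<phi>] \<open>\<pi> a \<in> S\<close> by (metis imageE)
  obtain j where j: "j \<in> S" "\<pi> j = \<phi> a"
    using permutes_image[OF \<pi>] \<open>\<phi> a \<in> S\<close> by (metis imageE)
  have "R (\<phi> a) (\<pi> a)"
    using twisted[OF a a] reflp_onD[OF refl a] by simp
  moreover have "R (\<pi> a) (\<phi> a)"
  proof -
    have "R k a"
      using twisted[OF k(1) a] k(2) reflp_onD[OF refl \<open>\<pi> a \<in> S\<close>] by simp
    moreover have "R a j"
      using twisted[OF a j(1)] j(2) reflp_onD[OF refl \<open>\<phi> a \<in> S\<close>] by simp
    ultimately have "R k j"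
      using transp_onD[OF trans k(1) a j(1)] by blast
    then show ?thesis
      using twisted[OF k(1) j(1)] k(2) j(2) by simp
  qed
  ultimately show ?thesis
    using antisymp_onD[OF antisym \<open>\<phi> a \<in> S\<close> \<open>\<pi> a \<in> S\<close>] by blast
qed

(* Plain inv denotes the group inverse of HOL-Algebra, which Jordan_Normal_Form imports. *)
lemma permutes_commute_iff_conjugate_eq:
  assumes p: "p permutes S" and \<pi>: "\<pi> permutes S"
  shows "\<pi> \<circ> p = p \<circ> \<pi> \<longleftrightarrow> (\<forall>k\<in>S. Hilbert_Choice.inv p (\<pi> (p k)) = \<pi> k)"
proof
  assume comm: "\<pi> \<circ> p = p \<circ> \<pi>"
  have "Hilbert_Choice.inv p (\<pi> (p k)) = \<pi> k" for k
    using fun_cong[OF comm, of k] by (simp add: permutes_inverses(2)[OF p])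
  then show "\<forall>k\<in>S. Hilbert_Choice.inv p (\<pi> (p k)) = \<pi> k"
    by blast
next
  assume conj: "\<forall>k\<in>S. Hilbert_Choice.inv p (\<pi> (p k)) = \<pi> k"
  show "\<pi> \<circ> p = p \<circ> \<pi>"
  proof
    fix k
    show "(\<pi> \<circ> p) k = (p \<circ> \<pi>) k"
    proof (cases "k \<in> S")
      case True
      have "p (Hilbert_Choice.inv p (\<pi> (p k))) = p (\<pi> k)"
        using conj True by simp
      then show ?thesis
        by (simp add: permutes_inverses(1)[OF p])
    next
      case False
      then show ?thesis
        using permutes_not_in[OF p] permutes_not_in[OF \<pi>] by simp
    qed
  qed
qed

lemma twisted_order_automorphism_iff:
  fixes R :: "'a \<Rightarrow> 'a \<Rightarrow> bool"
  assumes refl: "reflp_on S R" and trans: "transp_on S R" and antisym: "antisymp_on S R"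
    and p: "p permutes S" and \<pi>: "\<pi> permutes S"
  shows "(\<forall>i\<in>S. \<forall>j\<in>S. R (Hilbert_Choice.inv p (\<pi> i)) (\<pi> j) \<longleftrightarrow> R (Hilbert_Choice.inv p i) j)
    \<longleftrightarrow> (\<forall>i\<in>S. \<forall>j\<in>S. R (\<pi> i) (\<pi> j) \<longleftrightarrow> R i j) \<and> \<pi> \<circ> p = p \<circ> \<pi>"
    (is "?twisted \<longleftrightarrow> ?invariant \<and> ?commute")
proof
  assume ?twisted
  define \<phi> where "\<phi> = Hilbert_Choice.inv p \<circ> \<pi> \<circ> p"
  have "\<phi> permutes S"
    unfolding \<phi>_def using p \<pi> by (intro permutes_compose permutes_inv)
  have \<phi>_twisted: "R (\<phi> k) (\<pi> j) \<longleftrightarrow> R k j" if "k \<in> S" "j \<in> S" for k j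
  proof -
    have "p k \<in> S"
      using permutes_in_image[OF p] that(1) by simp
    then show ?thesis
      using \<open>?twisted\<close> \<open>j \<in> S\<close> by (simp add: \<phi>_def permutes_inverses(2)[OF p])
  qed
  have \<phi>_eq: "\<phi> k = \<pi> k" if "k \<in> S" for k
    using \<phi>_twisted that by (rule twisted_order_automorphism_eq[OF refl trans antisym \<open>\<phi> permutes S\<close> \<pi>])
  then have "\<forall>k\<in>S. Hilbert_Choice.inv p (\<pi> (p k)) = \<pi> k"
    by (simp add: \<phi>_def)
  then have ?commute
    using permutes_commute_iff_conjugate_eq[OF p \<pi>] by blast
  moreover have ?invariant
    using \<phi>_twisted \<phi>_eq by simp
  ultimately show "?invariant \<and> ?commute"
    by blast
next
  assume "?invariant \<and> ?commute"
  then have invariant: ?invariant and conj: "\<forall>k\<in>S. Hilbert_Choice.inv p (\<pi> (p k)) = \<pi> k"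
    using permutes_commute_iff_conjugate_eq[OF p \<pi>] by blast+
  have "Hilbert_Choice.inv p (\<pi> i) = \<pi> (Hilbert_Choice.inv p i)" if "i \<in> S" for i
  proof -
    have "Hilbert_Choice.inv p i \<in> S"
      using permutes_in_image[OF permutes_inv[OF p]] that by simp
    then show ?thesis
      using conj[rule_format, OF \<open>Hilbert_Choice.inv p i \<in> S\<close>] by (simp add: permutes_inverses(1)[OF p])
  qed
  then show ?twisted
    using invariant permutes_in_image[OF permutes_inv[OF p]] by simp
qed

lemma Pow_order_automorphism_empty:
  assumes onto: "\<And>B. B \<subseteq> U \<Longrightarrow> \<exists>A\<subseteq>U. \<Phi> A = B"
    and order: "\<And>A B. A \<subseteq> U \<Longrightarrow> B \<subseteq> U \<Longrightarrow> \<Phi> A \<subseteq> \<Phi> B \<longleftrightarrow> A \<subseteq> B"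
  shows "\<Phi> {} = {}"
proof -
  obtain C where "C \<subseteq> U" "\<Phi> C = {}"
    using onto[of "{}"] by blast
  then show ?thesis
    using order[of "{}" C] by auto
qed

lemma Pow_order_automorphism_singleton:
  assumes into: "\<And>A. A \<subseteq> U \<Longrightarrow> \<Phi> A \<subseteq> U"
    and onto: "\<And>B. B \<subseteq> U \<Longrightarrow> \<exists>A\<subseteq>U. \<Phi> A = B"
    and order: "\<And>A B. A \<subseteq> U \<Longrightarrow> B \<subseteq> U \<Longrightarrow> \<Phi> A \<subseteq> \<Phi> B \<longleftrightarrow> A \<subseteq> B"
    and l: "l \<in> U"
  shows "\<exists>x\<in>U. \<Phi> {l} = {x}"
proof -
  have empty: "\<Phi> {} = {}"
    using onto order by (rule Pow_order_automorphism_empty)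
  have "\<Phi> {l} \<noteq> {}"
    using order[of "{l}" "{}"] empty l by auto
  then obtain x where x: "x \<in> \<Phi> {l}"
    by blast
  have "x \<in> U"
    using x into[of "{l}"] l by auto
  then obtain C where C: "C \<subseteq> U" "\<Phi> C = {x}"
    using onto[of "{x}"] by blast
  have "C \<subseteq> {l}"
    using order[of C "{l}"] C x l by auto
  moreover have "C \<noteq> {}"
    using C empty by auto
  ultimately have "C = {l}"
    by (metis subset_singletonD)
  then show ?thesis
    using C \<open>x \<in> U\<close> by auto
qed

lemma Pow_order_automorphism_singleton_onto:
  assumes into: "\<And>A. A \<subseteq> U \<Longrightarrow> \<Phi> A \<subseteq> U"
    and onto: "\<And>B. B \<subseteq> U \<Longrightarrow> \<exists>A\<subseteq>U. \<Phi> A = B"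
    and order: "\<And>A B. A \<subseteq> U \<Longrightarrow> B \<subseteq> U \<Longrightarrow> \<Phi> A \<subseteq> \<Phi> B \<longleftrightarrow> A \<subseteq> B"
    and x: "x \<in> U"
  shows "\<exists>l\<in>U. \<Phi> {l} = {x}"
proof -
  obtain C where C: "C \<subseteq> U" "\<Phi> C = {x}"
    using onto[of "{x}"] x by blast
  then have "C \<noteq> {}"
    using Pow_order_automorphism_empty[OF onto order] by auto
  then obtain l where l: "l \<in> C"
    by blast
  then obtain y where "\<Phi> {l} = {y}"
    using Pow_order_automorphism_singleton[OF into onto order] C(1) by blast
  moreover have "\<Phi> {l} \<subseteq> \<Phi> C"
    using order[of "{l}" C] l C(1) by auto
  ultimately show ?thesis
    using l C by auto
qed

lemma Pow_order_automorphism_eq_image: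
  assumes into: "\<And>A. A \<subseteq> U \<Longrightarrow> \<Phi> A \<subseteq> U"
    and onto: "\<And>B. B \<subseteq> U \<Longrightarrow> \<exists>A\<subseteq>U. \<Phi> A = B"
    and order: "\<And>A B. A \<subseteq> U \<Longrightarrow> B \<subseteq> U \<Longrightarrow> \<Phi> A \<subseteq> \<Phi> B \<longleftrightarrow> A \<subseteq> B"
  shows "\<exists>\<rho>. \<rho> permutes U \<and> (\<forall>A\<subseteq>U. \<Phi> A = \<rho> ` A)"
proof -
  define \<rho> where "\<rho> l = (if l \<in> U then the_elem (\<Phi> {l}) else l)" for l
  have \<Phi>_singleton: "\<Phi> {l} = {\<rho> l}" and \<rho>_in: "\<rho> l \<in> U" if l: "l \<in> U" for l
  proof -
    obtain x where "x \<in> U" "\<Phi> {l} = {x}"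
      using Pow_order_automorphism_singleton[OF into onto order l] by blast
    then show "\<Phi> {l} = {\<rho> l}" "\<rho> l \<in> U"
      using l by (simp_all add: \<rho>_def)
  qed
  have mem_\<Phi>: "\<rho> l \<in> \<Phi> A \<longleftrightarrow> l \<in> A" if "l \<in> U" "A \<subseteq> U" for l A
  proof -
    have "\<rho> l \<in> \<Phi> A \<longleftrightarrow> \<Phi> {l} \<subseteq> \<Phi> A"
      by (simp add: \<Phi>_singleton[OF that(1)])
    also have "\<dots> \<longleftrightarrow> l \<in> A"
      using order[of "{l}" A] that by simp
    finally show ?thesis .
  qed
  have \<rho>_onto: "\<exists>l\<in>U. \<rho> l = x" if x: "x \<in> U" for x
  proof -
    obtain l where "l \<in> U" "\<Phi> {l} = {x}"
      using Pow_order_automorphism_singleton_onto[OF into onto order x] by blast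
    then have "\<rho> l = x"
      using \<Phi>_singleton[OF \<open>l \<in> U\<close>] by simp
    then show ?thesis
      using \<open>l \<in> U\<close> by blast
  qed
  have "bij_betw \<rho> U U"
  proof (rule bij_betw_imageI)
    show "inj_on \<rho> U"
    proof (rule inj_onI)
      fix a b
      assume "a \<in> U" "b \<in> U" "\<rho> a = \<rho> b"
      then show "a = b"
        using mem_\<Phi>[of a "{b}"] \<Phi>_singleton[of b] by simp
    qed
    show "\<rho> ` U = U"
      using \<rho>_in \<rho>_onto by (auto simp: image_iff)
  qed
  then have "\<rho> permutes U"
    by (rule bij_imp_permutes) (simp add: \<rho>_def)
  moreover have "\<Phi> A = \<rho> ` A" if A: "A \<subseteq> U" for A
  proof
    show "\<rho> ` A \<subseteq> \<Phi> A"
      using mem_\<Phi> A by auto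
    show "\<Phi> A \<subseteq> \<rho> ` A"
    proof
      fix x
      assume "x \<in> \<Phi> A"
      moreover have "x \<in> U"
        using \<open>x \<in> \<Phi> A\<close> into[OF A] by blast
      then obtain l where "l \<in> U" "\<rho> l = x"
        using \<rho>_onto by blast
      ultimately show "x \<in> \<rho> ` A"
        using mem_\<Phi>[of l A] A by blast
    qed
  qed
  ultimately show ?thesis
    by blast
qed


section \<open>Permutation matrices and incidence matrices\<close>

definition perm_mat :: "nat \<Rightarrow> (nat \<Rightarrow> nat) \<Rightarrow> 'a :: {zero, one} mat" where
  "perm_mat n p = mat n n (\<lambda>(i, j). if i = p j then 1 else 0)"

lemma perm_mat_carrier [simp]:
  "perm_mat n p \<in> carrier_mat n n" "dim_row (perm_mat n p) = n" "dim_col (perm_mat n p) = n"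
  by (simp_all add: perm_mat_def)

lemma perm_mat_index:
  "i < n \<Longrightarrow> j < n \<Longrightarrow> perm_mat n p $$ (i, j) = (if i = p j then 1 else 0)"
  by (simp add: perm_mat_def)

lemma is_perm_mat_iff: "is_perm_mat n Q \<longleftrightarrow> (\<exists>p. p permutes {..<n} \<and> Q = perm_mat n p)"
  by (simp add: is_perm_mat_def perm_mat_def)

lemma perm_mat_mult_index:
  fixes M :: "'a :: semiring_1 mat"
  assumes p: "p permutes {..<n}" and M: "M \<in> carrier_mat n nc" and i: "i < n" and j: "j < nc"
  shows "(perm_mat n p * M) $$ (i, j) = M $$ (Hilbert_Choice.inv p i, j)"
proof -
  have "Hilbert_Choice.inv p i < n"
    using permutes_in_image[OF permutes_inv[OF p]] i by simp
  have "(perm_mat n p * M) $$ (i, j) = (\<Sum>k\<in>{0..<n}. (if i = p k then 1 else 0) * M $$ (k, j))"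
    using M i j by (simp add: scalar_prod_def perm_mat_def)
  also have "\<dots> = (\<Sum>k\<in>{0..<n}. if k = Hilbert_Choice.inv p i then M $$ (k, j) else 0)"
    by (rule sum.cong) (auto simp: permutes_inverses[OF p])
  also have "\<dots> = M $$ (Hilbert_Choice.inv p i, j)"
    using \<open>Hilbert_Choice.inv p i < n\<close> by simp
  finally show ?thesis .
qed

lemma mult_perm_mat_index:
  fixes M :: "'a :: semiring_1 mat"
  assumes p: "p permutes {..<n}" and M: "M \<in> carrier_mat nr n" and i: "i < nr" and j: "j < n"
  shows "(M * perm_mat n p) $$ (i, j) = M $$ (i, p j)"
proof -
  have "p j < n"
    using permutes_in_image[OF p] j by simp
  have "(M * perm_mat n p) $$ (i, j) = (\<Sum>k\<in>{0..<n}. M $$ (i, k) * (if k = p j then 1 else 0))"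
    using M i j by (simp add: scalar_prod_def perm_mat_def)
  also have "\<dots> = (\<Sum>k\<in>{0..<n}. if k = p j then M $$ (i, k) else 0)"
    by (rule sum.cong) auto
  also have "\<dots> = M $$ (i, p j)"
    using \<open>p j < n\<close> by simp
  finally show ?thesis .
qed

lemma transpose_perm_mat:
  assumes "p permutes {..<n}"
  shows "transpose_mat (perm_mat n p) = perm_mat n (Hilbert_Choice.inv p)"
  by (rule eq_matI) (auto simp: perm_mat_def permutes_inv_eq[OF assms] permutes_inverses[OF assms])

lemma perm_mat_mult:
  assumes p: "p permutes {..<n}" and q: "q permutes {..<n}"
  shows "(perm_mat n p :: 'a :: semiring_1 mat) * perm_mat n q = perm_mat n (p \<circ> q)"
proof (rule eq_matI)
  fix i j
  assume "i < dim_row (perm_mat n (p \<circ> q) :: 'a mat)" and "j < dim_col (perm_mat n (p \<circ> q) :: 'a mat)"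
  then have i: "i < n" and j: "j < n"
    by simp_all
  have "q j < n"
    using permutes_in_image[OF q] j by simp
  then show "(perm_mat n p * perm_mat n q) $$ (i, j) = (perm_mat n (p \<circ> q) :: 'a mat) $$ (i, j)"
    using i j by (subst mult_perm_mat_index[OF q perm_mat_carrier(1)]) (simp_all add: perm_mat_index)
qed simp_all

lemma perm_mat_inject:
  assumes p: "p permutes {..<n}" and q: "q permutes {..<n}"
  shows "(perm_mat n p :: 'a :: zero_neq_one mat) = perm_mat n q \<longleftrightarrow> p = q"
proof
  assume eq: "(perm_mat n p :: 'a mat) = perm_mat n q"
  show "p = q"
  proof
    fix j
    show "p j = q j"
    proof (cases "j < n")
      case True
      then have "p j < n"
        using permutes_in_image[OF p] by simp
      have "(perm_mat n p :: 'a mat) $$ (p j, j) = 1"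
        using True \<open>p j < n\<close> by (simp add: perm_mat_def)
      then have "(perm_mat n q :: 'a mat) $$ (p j, j) = 1"
        by (simp only: eq)
      then show ?thesis
        using True \<open>p j < n\<close> by (simp add: perm_mat_index split: if_splits)
    next
      case False
      then show ?thesis
        using permutes_not_in[OF p] permutes_not_in[OF q] by simp
    qed
  qed
qed simp

lemma perm_mat_commute_iff:
  assumes p: "p permutes {..<n}" and q: "q permutes {..<n}"
  shows "(perm_mat n p :: 'a :: semiring_1 mat) * perm_mat n q = perm_mat n q * perm_mat n p
    \<longleftrightarrow> p \<circ> q = q \<circ> p"
  by (simp add: perm_mat_mult p q perm_mat_inject permutes_compose)

lemma perm_mat_conjugate:
  fixes M :: "'a :: semiring_1 mat"
  assumes p: "p permutes {..<n}" and M: "M \<in> carrier_mat n n"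
  shows "transpose_mat (perm_mat n p) * M * perm_mat n p = mat n n (\<lambda>(i, j). M $$ (p i, p j))"
proof (rule eq_matI)
  fix i j
  assume "i < dim_row (mat n n (\<lambda>(i, j). M $$ (p i, p j)))"
    and "j < dim_col (mat n n (\<lambda>(i, j). M $$ (p i, p j)))"
  then have i: "i < n" and j: "j < n"
    by simp_all
  have "perm_mat n (Hilbert_Choice.inv p) * M \<in> carrier_mat n n"
    by (rule mult_carrier_mat[OF perm_mat_carrier(1) M])
  then have "(transpose_mat (perm_mat n p) * M * perm_mat n p) $$ (i, j)
      = (perm_mat n (Hilbert_Choice.inv p) * M) $$ (i, p j)"
    unfolding transpose_perm_mat[OF p] using i j by (rule mult_perm_mat_index[OF p])
  also have "\<dots> = M $$ (p i, p j)"
    using perm_mat_mult_index[OF permutes_inv[OF p] M i] permutes_in_image[OF p, of j] j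
    by (simp add: permutes_inv_inv[OF p])
  finally show "(transpose_mat (perm_mat n p) * M * perm_mat n p) $$ (i, j)
      = mat n n (\<lambda>(i, j). M $$ (p i, p j)) $$ (i, j)"
    using i j by simp
qed (use M in simp_all)

lemma Aut_iff:
  assumes M: "M \<in> carrier_mat n n"
  shows "Q \<in> Aut M \<longleftrightarrow> (\<exists>p. p permutes {..<n} \<and> Q = perm_mat n p \<and>
    (\<forall>i<n. \<forall>j<n. M $$ (p i, p j) = M $$ (i, j)))"
proof -
  have "transpose_mat (perm_mat n p) * M * perm_mat n p = M
      \<longleftrightarrow> (\<forall>i<n. \<forall>j<n. M $$ (p i, p j) = M $$ (i, j))" if "p permutes {..<n}" for p
    using M by (auto simp: perm_mat_conjugate[OF that M] mat_eq_iff)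
  then show ?thesis
    using M by (auto simp: Aut_def is_perm_mat_iff)
qed

definition incidence_mat :: "nat \<Rightarrow> (nat \<Rightarrow> nat \<Rightarrow> bool) \<Rightarrow> int mat" where
  "incidence_mat n R = mat n n (\<lambda>(i, j). of_bool (R i j))"

lemma incidence_mat_carrier [simp]: "incidence_mat n R \<in> carrier_mat n n"
  by (simp add: incidence_mat_def)

lemma incidence_mat_index [simp]: "i < n \<Longrightarrow> j < n \<Longrightarrow> incidence_mat n R $$ (i, j) = of_bool (R i j)"
  by (simp add: incidence_mat_def)

lemma Aut_incidence_mat:
  "Q \<in> Aut (incidence_mat n R) \<longleftrightarrow> (\<exists>p. p permutes {..<n} \<and> Q = perm_mat n p \<and>
    (\<forall>i<n. \<forall>j<n. R (p i) (p j) \<longleftrightarrow> R i j))"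
proof -
  have "(\<forall>i<n. \<forall>j<n. incidence_mat n R $$ (p i, p j) = incidence_mat n R $$ (i, j))
      \<longleftrightarrow> (\<forall>i<n. \<forall>j<n. R (p i) (p j) \<longleftrightarrow> R i j)" if "p permutes {..<n}" for p
  proof -
    have "incidence_mat n R $$ (p i, p j) = incidence_mat n R $$ (i, j) \<longleftrightarrow> (R (p i) (p j) \<longleftrightarrow> R i j)"
      if "i < n" "j < n" for i j
    proof -
      have "p i < n" "p j < n"
        using permutes_in_image[OF \<open>p permutes {..<n}\<close>] that by simp_all
      then show ?thesis
        using that by (simp only: incidence_mat_index of_bool_eq_iff)
    qed
    then show ?thesis
      by blast
  qed
  then show ?thesis
    using Aut_iff[OF incidence_mat_carrier] by metis
qed

lemma perm_mat_mult_incidence_mat: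
  assumes p: "p permutes {..<n}"
  shows "perm_mat n p * incidence_mat n R = incidence_mat n (\<lambda>i j. R (Hilbert_Choice.inv p i) j)"
proof (rule eq_matI)
  fix i j
  assume "i < dim_row (incidence_mat n (\<lambda>i j. R (Hilbert_Choice.inv p i) j))"
    and "j < dim_col (incidence_mat n (\<lambda>i j. R (Hilbert_Choice.inv p i) j))"
  then have i: "i < n" and j: "j < n"
    by (simp_all add: incidence_mat_def)
  have "Hilbert_Choice.inv p i < n"
    using permutes_in_image[OF permutes_inv[OF p]] i by simp
  then show "(perm_mat n p * incidence_mat n R) $$ (i, j)
      = incidence_mat n (\<lambda>i j. R (Hilbert_Choice.inv p i) j) $$ (i, j)"
    using i j by (subst perm_mat_mult_index[OF p incidence_mat_carrier]) simp_all
qed (simp_all add: incidence_mat_def)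

lemma Aut_perm_mat_mult_incidence_mat:
  assumes "reflp_on {..<n} R" "transp_on {..<n} R" "antisymp_on {..<n} R"
    and p: "p permutes {..<n}"
  shows "Aut (perm_mat n p * incidence_mat n R)
    = {Q \<in> Aut (incidence_mat n R). Q * perm_mat n p = perm_mat n p * Q}"
proof -
  have twisted_iff: "(\<forall>i<n. \<forall>j<n. R (Hilbert_Choice.inv p (\<pi> i)) (\<pi> j) \<longleftrightarrow> R (Hilbert_Choice.inv p i) j)
      \<longleftrightarrow> (\<forall>i<n. \<forall>j<n. R (\<pi> i) (\<pi> j) \<longleftrightarrow> R i j)
        \<and> perm_mat n \<pi> * perm_mat n p = perm_mat n p * (perm_mat n \<pi> :: int mat)"
    if "\<pi> permutes {..<n}" for \<pi>
    using twisted_order_automorphism_iff[OF assms that] perm_mat_commute_iff[OF that p, where 'a = int]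
    unfolding Ball_def lessThan_iff by simp
  show ?thesis
  proof (rule Set.set_eqI)
    fix Q
    show "Q \<in> Aut (perm_mat n p * incidence_mat n R)
        \<longleftrightarrow> Q \<in> {Q \<in> Aut (incidence_mat n R). Q * perm_mat n p = perm_mat n p * Q}"
      unfolding perm_mat_mult_incidence_mat[OF p] mem_Collect_eq Aut_incidence_mat
      using twisted_iff by blast
  qed
qed

section \<open>Binary indexing and the matrix T\<close>

definition bit_set :: "nat \<Rightarrow> nat \<Rightarrow> nat set" where
  "bit_set m j = {l \<in> {1..m}. index_bit m j l}"

lemma index_bit_eq_bit: "index_bit m j l = bit j (m - l)"
  by (simp add: index_bit_def bit_iff_odd)

lemma bits_index_eq_horner_sum:
  "bits_index m x = horner_sum of_bool 2 (map (\<lambda>k. x (m - k)) [0..<m])"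
proof -
  have "bits_index m x = (\<Sum>k = 0..<m. if x (m - k) then 2 ^ k else 0)"
    unfolding bits_index_def
    by (rule sum.reindex_bij_witness[of _ "\<lambda>k. m - k" "\<lambda>i. m - i"]) auto
  also have "\<dots> = horner_sum of_bool 2 (map (\<lambda>k. x (m - k)) [0..<m])"
    unfolding horner_sum_eq_sum by (rule sum.cong) auto
  finally show ?thesis .
qed

lemma bits_index_less: "bits_index m x < 2 ^ m"
  using horner_sum_bound[of "map (\<lambda>k. x (m - k)) [0..<m]"]
  by (simp add: bits_index_eq_horner_sum)

lemma index_bit_bits_index: "l \<in> {1..m} \<Longrightarrow> index_bit m (bits_index m x) l = x l"
  unfolding bits_index_eq_horner_sum index_bit_eq_bit
  by (auto simp: bit_horner_sum_bit_iff)

lemma bits_index_index_bit: "j < 2 ^ m \<Longrightarrow> bits_index m (index_bit m j) = j"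
proof -
  assume j: "j < 2 ^ m"
  have "map (\<lambda>k. index_bit m j (m - k)) [0..<m] = map (bit j) [0..<m]"
    by (rule map_cong) (auto simp: index_bit_eq_bit)
  then have "bits_index m (index_bit m j) = horner_sum of_bool 2 (map (bit j) [0..<m])"
    unfolding bits_index_eq_horner_sum by metis
  also have "\<dots> = j"
    using j by (simp add: horner_sum_bit_eq_take_bit take_bit_nat_eq_self)
  finally show ?thesis .
qed

lemma bit_set_subset: "bit_set m j \<subseteq> {1..m}"
  by (auto simp: bit_set_def)

lemma bit_set_bits_index: "A \<subseteq> {1..m} \<Longrightarrow> bit_set m (bits_index m (\<lambda>l. l \<in> A)) = A"
  by (auto simp: bit_set_def index_bit_bits_index)

lemma bits_index_bit_set: "j < 2 ^ m \<Longrightarrow> bits_index m (\<lambda>l. l \<in> bit_set m j) = j"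
proof -
  assume "j < 2 ^ m"
  have "bits_index m (\<lambda>l. l \<in> bit_set m j) = bits_index m (index_bit m j)"
    unfolding bits_index_def by (rule sum.cong) (auto simp: bit_set_def)
  then show ?thesis
    using bits_index_index_bit[OF \<open>j < 2 ^ m\<close>] by simp
qed

lemma bit_set_inject: "i < 2 ^ m \<Longrightarrow> j < 2 ^ m \<Longrightarrow> bit_set m i = bit_set m j \<longleftrightarrow> i = j"
  by (metis bits_index_bit_set)

lemma bit_set_subset_iff: "bit_set m j \<subseteq> bit_set m i \<longleftrightarrow> (\<forall>k<m. bit j k \<longrightarrow> bit i k)"
proof
  assume subset: "bit_set m j \<subseteq> bit_set m i"
  show "\<forall>k<m. bit j k \<longrightarrow> bit i k"
  proof (intro allI impI)
    fix k
    assume "k < m" "bit j k"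
    then have "m - k \<in> bit_set m j"
      by (auto simp: bit_set_def index_bit_eq_bit)
    then have "m - k \<in> bit_set m i"
      using subset by blast
    then show "bit i k"
      using \<open>k < m\<close> by (auto simp: bit_set_def index_bit_eq_bit)
  qed
next
  assume "\<forall>k<m. bit j k \<longrightarrow> bit i k"
  then show "bit_set m j \<subseteq> bit_set m i"
    by (auto simp: bit_set_def index_bit_eq_bit)
qed

lemma T0_index: "a < 2 \<Longrightarrow> b < 2 \<Longrightarrow> T0 $$ (a, b) = of_bool (b = 1 \<longrightarrow> a = 1)"
  by (auto simp: T0_def mat_of_rows_list_def less_2_cases_iff)

lemma T0_carrier: "T0 \<in> carrier_mat 2 2"
  unfolding T0_def mat_of_rows_list_def by (intro carrier_matI) auto

lemma kron_index:
  "i < dim_row A * dim_row B \<Longrightarrow> j < dim_col A * dim_col B \<Longrightarrow>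
    kron A B $$ (i, j) = A $$ (i div dim_row B, j div dim_col B) * B $$ (i mod dim_row B, j mod dim_col B)"
  by (simp add: kron_def)

lemma Tm_carrier: "Tm m \<in> carrier_mat (2 ^ m) (2 ^ m)"
  by (induction m) (use T0_carrier in \<open>auto simp: Tm_def kron_def\<close>)

lemma top_bit_div:
  fixes i :: nat
  assumes "i < 2 ^ Suc m"
  shows "i div 2 ^ m < 2" and "bit i m \<longleftrightarrow> i div 2 ^ m = 1"
proof -
  show "i div 2 ^ m < 2"
    using assms by (simp add: less_mult_imp_div_less)
  then show "bit i m \<longleftrightarrow> i div 2 ^ m = 1"
    by (auto simp: bit_iff_odd less_2_cases_iff)
qed

lemma Tm_eq_bits: "Tm m = mat (2 ^ m) (2 ^ m) (\<lambda>(i, j). of_bool (\<forall>k<m. bit j k \<longrightarrow> bit i k))"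
proof (induction m)
  case 0
  show ?case
    by (rule eq_matI) (auto simp: Tm_def)
next
  case (Suc m)
  have low_bits: "bit (i mod 2 ^ m) k \<longleftrightarrow> k < m \<and> bit i k" for i k :: nat
    by (simp flip: take_bit_eq_mod add: bit_take_bit_iff)
  have "Tm (Suc m) $$ (i, j) = of_bool (\<forall>k<Suc m. bit j k \<longrightarrow> bit i k)"
    if i: "i < 2 ^ Suc m" and j: "j < 2 ^ Suc m" for i j
  proof -
    have "Tm (Suc m) $$ (i, j) = T0 $$ (i div 2 ^ m, j div 2 ^ m) * Tm m $$ (i mod 2 ^ m, j mod 2 ^ m)"
      using i j T0_carrier Tm_carrier[of m] by (simp add: Tm_def kron_index)
    also have "\<dots> = of_bool (j div 2 ^ m = 1 \<longrightarrow> i div 2 ^ m = 1) * of_bool (\<forall>k<m. bit j k \<longrightarrow> bit i k)"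
      using top_bit_div(1)[OF i] top_bit_div(1)[OF j] by (simp add: T0_index Suc.IH low_bits)
    also have "\<dots> = of_bool (\<forall>k<Suc m. bit j k \<longrightarrow> bit i k)"
      by (simp only: top_bit_div(2)[OF i] top_bit_div(2)[OF j] All_less_Suc of_bool_conj)
    finally show ?thesis .
  qed
  then show ?case
    using Tm_carrier[of "Suc m"] by (intro eq_matI) auto
qed

lemma Tm_eq_incidence_mat: "Tm m = incidence_mat (2 ^ m) (\<lambda>i j. bit_set m j \<subseteq> bit_set m i)"
  by (simp add: Tm_eq_bits incidence_mat_def bit_set_subset_iff)

section \<open>Coordinate permutations\<close>

definition bit_perm :: "nat \<Rightarrow> (nat \<Rightarrow> nat) \<Rightarrow> nat \<Rightarrow> nat" where
  "bit_perm m \<tau> j = (if j < 2 ^ m then bits_index m (\<lambda>l. index_bit m j (\<tau> l)) else j)"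

lemma Psig_eq_perm_mat: "Psig m \<tau> = perm_mat (2 ^ m) (bit_perm m \<tau>)"
  unfolding Psig_def perm_mat_def bit_perm_def by (rule cong_mat) simp_all

lemma bit_perm_less: "j < 2 ^ m \<Longrightarrow> bit_perm m \<tau> j < 2 ^ m"
  by (simp add: bit_perm_def bits_index_less)

lemma bit_set_bit_perm:
  assumes "\<tau> permutes {1..m}" and "j < 2 ^ m"
  shows "bit_set m (bit_perm m \<tau> j) = \<tau> -` bit_set m j"
proof -
  have "index_bit m (bit_perm m \<tau> j) l = index_bit m j (\<tau> l)" if "l \<in> {1..m}" for l
    using assms(2) that by (simp add: bit_perm_def index_bit_bits_index)
  then show ?thesis
    using permutes_in_image[OF assms(1)] by (auto simp: bit_set_def)
qed

lemma bit_perm_eqI: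
  assumes "\<tau> permutes {1..m}"
    and "\<And>j. j < 2 ^ m \<Longrightarrow> \<pi> j < 2 ^ m \<and> bit_set m (\<pi> j) = \<tau> -` bit_set m j"
    and "\<And>j. \<not> j < 2 ^ m \<Longrightarrow> \<pi> j = j"
  shows "\<pi> = bit_perm m \<tau>"
proof
  fix j
  show "\<pi> j = bit_perm m \<tau> j"
  proof (cases "j < 2 ^ m")
    case True
    have "bit_set m (\<pi> j) = bit_set m (bit_perm m \<tau> j)"
      using assms(2)[OF True] bit_set_bit_perm[OF assms(1) True] by simp
    then show ?thesis
      using bit_set_inject assms(2)[OF True] bit_perm_less[OF True] by blast
  next
    case False
    then show ?thesis
      using assms(3) by (simp add: bit_perm_def)
  qed
qed

lemma bit_perm_comp:
  assumes \<tau>: "\<tau> permutes {1..m}" and \<rho>: "\<rho> permutes {1..m}"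
  shows "bit_perm m \<tau> \<circ> bit_perm m \<rho> = bit_perm m (\<rho> \<circ> \<tau>)"
proof (rule bit_perm_eqI)
  show "\<rho> \<circ> \<tau> permutes {1..m}"
    using permutes_compose[OF \<tau> \<rho>] .
  fix j :: nat
  assume j: "j < 2 ^ m"
  then have "bit_perm m \<rho> j < 2 ^ m"
    by (rule bit_perm_less)
  then show "(bit_perm m \<tau> \<circ> bit_perm m \<rho>) j < 2 ^ m
      \<and> bit_set m ((bit_perm m \<tau> \<circ> bit_perm m \<rho>) j) = (\<rho> \<circ> \<tau>) -` bit_set m j"
    by (simp add: bit_perm_less bit_set_bit_perm[OF \<tau>] bit_set_bit_perm[OF \<rho> j] vimage_comp)
next
  fix j :: nat
  assume "\<not> j < 2 ^ m"
  then show "(bit_perm m \<tau> \<circ> bit_perm m \<rho>) j = j"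
    by (simp add: bit_perm_def)
qed

lemma bit_perm_id: "bit_perm m id = id"
  by (rule bit_perm_eqI[symmetric]) (simp_all add: bit_set_subset vimage_id)

lemma bit_perm_permutes:
  assumes \<tau>: "\<tau> permutes {1..m}"
  shows "bit_perm m \<tau> permutes {..<2 ^ m}"
proof -
  have right_inverse: "bit_perm m \<tau> \<circ> bit_perm m (Hilbert_Choice.inv \<tau>) = id"
    by (simp only: bit_perm_comp[OF \<tau> permutes_inv[OF \<tau>]] permutes_inv_o(2)[OF \<tau>] bit_perm_id)
  have left_inverse: "bit_perm m (Hilbert_Choice.inv \<tau>) \<circ> bit_perm m \<tau> = id"
    by (simp only: bit_perm_comp[OF permutes_inv[OF \<tau>] \<tau>] permutes_inv_o(1)[OF \<tau>] bit_perm_id)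
  show ?thesis
  proof (rule bij_imp_permutes)
    show "bij_betw (bit_perm m \<tau>) {..<2 ^ m} {..<2 ^ m}"
    proof (rule bij_betwI[where g = "bit_perm m (Hilbert_Choice.inv \<tau>)"])
      show "bit_perm m \<tau> \<in> {..<2 ^ m} \<rightarrow> {..<2 ^ m}"
        "bit_perm m (Hilbert_Choice.inv \<tau>) \<in> {..<2 ^ m} \<rightarrow> {..<2 ^ m}"
        by (simp_all add: Pi_iff bit_perm_less)
      show "bit_perm m (Hilbert_Choice.inv \<tau>) (bit_perm m \<tau> j) = j" for j
        using fun_cong[OF left_inverse, of j] by simp
      show "bit_perm m \<tau> (bit_perm m (Hilbert_Choice.inv \<tau>) j) = j" for j
        using fun_cong[OF right_inverse, of j] by simp
    qed
    show "bit_perm m \<tau> j = j" if "j \<notin> {..<2 ^ m}" for j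
      using that by (simp add: bit_perm_def)
  qed
qed

lemma bit_perm_inject:
  assumes \<tau>: "\<tau> permutes {1..m}" and \<rho>: "\<rho> permutes {1..m}"
  shows "bit_perm m \<tau> = bit_perm m \<rho> \<longleftrightarrow> \<tau> = \<rho>"
proof
  assume eq: "bit_perm m \<tau> = bit_perm m \<rho>"
  show "\<tau> = \<rho>"
  proof
    fix l
    show "\<tau> l = \<rho> l"
    proof (cases "l \<in> {1..m}")
      case True
      define j where "j = bits_index m (\<lambda>x. x \<in> {\<tau> l})"
      have "j < 2 ^ m"
        by (simp add: j_def bits_index_less)
      have "{\<tau> l} \<subseteq> {1..m}"
        using permutes_in_image[OF \<tau>] True by simp
      then have "bit_set m j = {\<tau> l}"
        unfolding j_def by (rule bit_set_bits_index)
      then have "\<tau> -` {\<tau> l} = \<rho> -` {\<tau> l}"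
        using bit_set_bit_perm[OF \<tau> \<open>j < 2 ^ m\<close>] bit_set_bit_perm[OF \<rho> \<open>j < 2 ^ m\<close>] eq by simp
      moreover have "l \<in> \<tau> -` {\<tau> l}"
        by simp
      ultimately have "l \<in> \<rho> -` {\<tau> l}"
        by simp
      then show ?thesis
        by simp
    next
      case False
      then show ?thesis
        using permutes_not_in[OF \<tau>] permutes_not_in[OF \<rho>] by simp
    qed
  qed
qed simp

lemma Psig_mult:
  assumes "\<tau> permutes {1..m}" and "\<rho> permutes {1..m}"
  shows "Psig m \<tau> * Psig m \<rho> = Psig m (\<rho> \<circ> \<tau>)"
  unfolding Psig_eq_perm_mat
  by (simp only: perm_mat_mult[OF bit_perm_permutes[OF assms(1)] bit_perm_permutes[OF assms(2)]]
      bit_perm_comp[OF assms])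

lemma Psig_inject:
  assumes "\<tau> permutes {1..m}" and "\<rho> permutes {1..m}"
  shows "Psig m \<tau> = Psig m \<rho> \<longleftrightarrow> \<tau> = \<rho>"
  unfolding Psig_eq_perm_mat
  by (simp only: perm_mat_inject[OF bit_perm_permutes[OF assms(1)] bit_perm_permutes[OF assms(2)]]
      bit_perm_inject[OF assms])

lemma Psig_commute_iff:
  assumes \<tau>: "\<tau> permutes {1..m}" and \<sigma>: "\<sigma> permutes {1..m}"
  shows "Psig m \<tau> * Psig m \<sigma> = Psig m \<sigma> * Psig m \<tau> \<longleftrightarrow> \<tau> \<circ> \<sigma> = \<sigma> \<circ> \<tau>"
  unfolding Psig_mult[OF \<tau> \<sigma>] Psig_mult[OF \<sigma> \<tau>]
    Psig_inject[OF permutes_compose[OF \<tau> \<sigma>] permutes_compose[OF \<sigma> \<tau>]]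
  by (rule eq_commute)

lemma order_automorphism_eq_bit_perm:
  assumes \<pi>: "\<pi> permutes {..<2 ^ m}"
    and order: "\<forall>i<2 ^ m. \<forall>j<2 ^ m. bit_set m (\<pi> j) \<subseteq> bit_set m (\<pi> i) \<longleftrightarrow> bit_set m j \<subseteq> bit_set m i"
  shows "\<exists>\<tau>. \<tau> permutes {1..m} \<and> \<pi> = bit_perm m \<tau>"
proof -
  have \<pi>_less: "\<pi> j < 2 ^ m" if "j < 2 ^ m" for j
    using permutes_in_image[OF \<pi>] that by simp
  define \<Phi> where "\<Phi> A = bit_set m (\<pi> (bits_index m (\<lambda>l. l \<in> A)))" for A
  have onto: "\<exists>A\<subseteq>{1..m}. \<Phi> A = B" if "B \<subseteq> {1..m}" for B
  proof -
    define j where "j = Hilbert_Choice.inv \<pi> (bits_index m (\<lambda>l. l \<in> B))"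
    have "j < 2 ^ m"
      using permutes_in_image[OF permutes_inv[OF \<pi>]] bits_index_less by (simp add: j_def)
    then have "\<Phi> (bit_set m j) = B"
      using that by (simp add: \<Phi>_def bits_index_bit_set j_def permutes_inverses[OF \<pi>] bit_set_bits_index)
    then show ?thesis
      using bit_set_subset by blast
  qed
  have order_\<Phi>: "\<Phi> A \<subseteq> \<Phi> B \<longleftrightarrow> A \<subseteq> B" if "A \<subseteq> {1..m}" "B \<subseteq> {1..m}" for A B
    using order bits_index_less that by (simp add: \<Phi>_def bit_set_bits_index)
  have "\<exists>\<rho>. \<rho> permutes {1..m} \<and> (\<forall>A\<subseteq>{1..m}. \<Phi> A = \<rho> ` A)"
    by (rule Pow_order_automorphism_eq_image[OF _ onto order_\<Phi>]) (simp only: \<Phi>_def bit_set_subset)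
  then obtain \<rho> where \<rho>: "\<rho> permutes {1..m}" and \<Phi>_eq: "\<forall>A\<subseteq>{1..m}. \<Phi> A = \<rho> ` A"
    by blast
  have "\<pi> = bit_perm m (Hilbert_Choice.inv \<rho>)"
  proof (rule bit_perm_eqI)
    show "Hilbert_Choice.inv \<rho> permutes {1..m}"
      using permutes_inv[OF \<rho>] .
    fix j :: nat
    assume "j < 2 ^ m"
    then have "bit_set m (\<pi> j) = \<Phi> (bit_set m j)"
      by (simp add: \<Phi>_def bits_index_bit_set)
    also have "\<dots> = \<rho> ` bit_set m j"
      using \<Phi>_eq bit_set_subset by blast
    also have "\<dots> = Hilbert_Choice.inv \<rho> -` bit_set m j"
      by (simp add: bij_vimage_eq_inv_image permutes_bij[OF permutes_inv[OF \<rho>]] permutes_inv_inv[OF \<rho>])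
    finally show "\<pi> j < 2 ^ m \<and> bit_set m (\<pi> j) = Hilbert_Choice.inv \<rho> -` bit_set m j"
      using \<pi>_less \<open>j < 2 ^ m\<close> by blast
  next
    fix j :: nat
    assume "\<not> j < 2 ^ m"
    then show "\<pi> j = j"
      using permutes_not_in[OF \<pi>] by simp
  qed
  then show ?thesis
    using permutes_inv[OF \<rho>] by blast
qed

lemma surj_vimage_subset_iff: "surj f \<Longrightarrow> f -` A \<subseteq> f -` B \<longleftrightarrow> A \<subseteq> B"
  by (metis surj_image_vimage_eq vimage_mono vimage_subsetD)

lemma Aut_Tm: "Aut (Tm m) = {Psig m \<tau> | \<tau>. \<tau> permutes {1..m}}"
proof (rule Set.set_eqI)
  fix Q
  have bit_perm_order: "bit_set m (bit_perm m \<tau> j) \<subseteq> bit_set m (bit_perm m \<tau> i)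
      \<longleftrightarrow> bit_set m j \<subseteq> bit_set m i" if "\<tau> permutes {1..m}" "i < 2 ^ m" "j < 2 ^ m" for \<tau> i j
    by (simp only: bit_set_bit_perm[OF that(1) that(2)] bit_set_bit_perm[OF that(1) that(3)]
        surj_vimage_subset_iff[OF permutes_surj[OF that(1)]])
  show "Q \<in> Aut (Tm m) \<longleftrightarrow> Q \<in> {Psig m \<tau> | \<tau>. \<tau> permutes {1..m}}"
  proof
    assume "Q \<in> Aut (Tm m)"
    then obtain \<pi> where \<pi>: "\<pi> permutes {..<2 ^ m}" and Q: "Q = perm_mat (2 ^ m) \<pi>"
      and order: "\<forall>i<2 ^ m. \<forall>j<2 ^ m. bit_set m (\<pi> j) \<subseteq> bit_set m (\<pi> i) \<longleftrightarrow> bit_set m j \<subseteq> bit_set m i"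
      unfolding Tm_eq_incidence_mat Aut_incidence_mat by blast
    obtain \<tau> where "\<tau> permutes {1..m}" and "\<pi> = bit_perm m \<tau>"
      using order_automorphism_eq_bit_perm[OF \<pi> order] by blast
    then show "Q \<in> {Psig m \<tau> | \<tau>. \<tau> permutes {1..m}}"
      unfolding Q Psig_eq_perm_mat by blast
  next
    assume "Q \<in> {Psig m \<tau> | \<tau>. \<tau> permutes {1..m}}"
    then obtain \<tau> where \<tau>: "\<tau> permutes {1..m}" and Q: "Q = perm_mat (2 ^ m) (bit_perm m \<tau>)"
      unfolding Psig_eq_perm_mat by blast
    show "Q \<in> Aut (Tm m)"
      unfolding Tm_eq_incidence_mat Aut_incidence_mat
      using bit_perm_permutes[OF \<tau>] Q bit_perm_order[OF \<tau>] by blast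
  qed
qed

lemma bit_set_subset_partial_order:
  "reflp_on {..<2 ^ m} (\<lambda>i j. bit_set m j \<subseteq> bit_set m i)"
  "transp_on {..<2 ^ m} (\<lambda>i j. bit_set m j \<subseteq> bit_set m i)"
  "antisymp_on {..<2 ^ m} (\<lambda>i j. bit_set m j \<subseteq> bit_set m i)"
proof -
  show "reflp_on {..<2 ^ m} (\<lambda>i j. bit_set m j \<subseteq> bit_set m i)"
    by (rule reflp_onI) (rule subset_refl)
  show "transp_on {..<2 ^ m} (\<lambda>i j. bit_set m j \<subseteq> bit_set m i)"
    by (rule transp_onI) (rule subset_trans)
  show "antisymp_on {..<2 ^ m} (\<lambda>i j. bit_set m j \<subseteq> bit_set m i)"
    by (rule antisymp_onI) (metis bit_set_inject lessThan_iff subset_antisym)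
qed

lemma Aut_perm_mat_mult_Tm:
  assumes "p permutes {..<2 ^ m}"
  shows "Aut (perm_mat (2 ^ m) p * Tm m) = {Q \<in> Aut (Tm m). Q * perm_mat (2 ^ m) p = perm_mat (2 ^ m) p * Q}"
  unfolding Tm_eq_incidence_mat using bit_set_subset_partial_order assms
  by (rule Aut_perm_mat_mult_incidence_mat)

lemma Aut_Tm_centralizer_Psig:
  assumes \<sigma>: "\<sigma> permutes {1..m}"
  shows "{Q \<in> Aut (Tm m). Q * Psig m \<sigma> = Psig m \<sigma> * Q}
    = {Psig m \<tau> | \<tau>. \<tau> permutes {1..m} \<and> \<tau> \<circ> \<sigma> = \<sigma> \<circ> \<tau>}"
proof (rule Set.set_eqI, rule iffI)
  fix Q
  assume "Q \<in> {Q \<in> Aut (Tm m). Q * Psig m \<sigma> = Psig m \<sigma> * Q}"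
  then obtain \<tau> where \<tau>: "\<tau> permutes {1..m}" and Q: "Q = Psig m \<tau>" and "Q * Psig m \<sigma> = Psig m \<sigma> * Q"
    unfolding Aut_Tm by blast
  then have "\<tau> \<circ> \<sigma> = \<sigma> \<circ> \<tau>"
    using Psig_commute_iff[OF \<tau> \<sigma>] by simp
  then show "Q \<in> {Psig m \<tau> | \<tau>. \<tau> permutes {1..m} \<and> \<tau> \<circ> \<sigma> = \<sigma> \<circ> \<tau>}"
    using \<tau> Q by blast
next
  fix Q
  assume "Q \<in> {Psig m \<tau> | \<tau>. \<tau> permutes {1..m} \<and> \<tau> \<circ> \<sigma> = \<sigma> \<circ> \<tau>}"
  then obtain \<tau> where \<tau>: "\<tau> permutes {1..m}" and Q: "Q = Psig m \<tau>" and "\<tau> \<circ> \<sigma> = \<sigma> \<circ> \<tau>"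
    by blast
  then have "Q * Psig m \<sigma> = Psig m \<sigma> * Q"
    using Psig_commute_iff[OF \<tau> \<sigma>] by simp
  then show "Q \<in> {Q \<in> Aut (Tm m). Q * Psig m \<sigma> = Psig m \<sigma> * Q}"
    unfolding Aut_Tm using \<tau> Q by blast
qed

theorem mainTheorem13:
  fixes m :: nat and P :: "int mat"
  assumes "P \<in> Aut (Tm m)"
  shows "Aut (P * Tm m) = {Q \<in> Aut (Tm m). Q * P = P * Q} \<and>
         (\<forall>\<sigma>. \<sigma> permutes {1..m} \<and> P = Psig m \<sigma> \<longrightarrow>
           Aut (P * Tm m) = {Psig m \<tau> | \<tau>. \<tau> permutes {1..m} \<and> \<tau> \<circ> \<sigma> = \<sigma> \<circ> \<tau>})"
proof (intro conjI allI impI)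
  obtain p where p: "p permutes {..<2 ^ m}" and P: "P = perm_mat (2 ^ m) p"
    using assms unfolding Tm_eq_incidence_mat Aut_incidence_mat by blast
  show centralizer: "Aut (P * Tm m) = {Q \<in> Aut (Tm m). Q * P = P * Q}"
    unfolding P by (rule Aut_perm_mat_mult_Tm[OF p])
  fix \<sigma>
  assume "\<sigma> permutes {1..m} \<and> P = Psig m \<sigma>"
  then have \<sigma>: "\<sigma> permutes {1..m}" and P_\<sigma>: "P = Psig m \<sigma>"
    by blast+
  show "Aut (P * Tm m) = {Psig m \<tau> | \<tau>. \<tau> permutes {1..m} \<and> \<tau> \<circ> \<sigma> = \<sigma> \<circ> \<tau>}"
    unfolding centralizer unfolding P_\<sigma> by (rule Aut_Tm_centralizer_Psig[OF \<sigma>])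
qed

end
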